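(* Let $n,m\ge1$, $r>0$, and let $\mathbf b_1,\dots,\mathbf b_m\in[0,\infty)^n$ be nonzero vectors. Put $D_{ij}=\frac{r}{m}(\mathbf b_i\cdot\mathbf b_j)$ and $\overline D=\max_{i,j}D_{ij}$. Define $\alpha^{(t)}\in\mathbb{R}^m$, $t\ge0$, by $\alpha^{(0)}_k=\sqrt{1/(\overline D m)}$ for all $k$, and, given $\alpha^{(t)}$: let $E_i^{(t)}=\sum_{j=1}^m D_{ij}\alpha^{(t)}_i\alpha^{(t)}_j-1$, choose $k=k_t$ with $|E^{(t)}_k|=\max_i|E^{(t)}_i|$, set $\alpha^{(t+1)}_i=\alpha^{(t)}_i$ for $i\neq k$ and $\alpha^{(t+1)}_k=\frac{-s+\sqrt{s^2+4D_{kk}}}{2D_{kk}}$ with $s=\sum_{i\ne k}D_{ik}\alpha^{(t)}_i$. Let $E^{(t)}=\sum_{i=1}^m|E^{(t)}_i|$. Then the sequence $(E^{(t)})_{t\ge0}$ is decreasing: $E^{(t+1)}\le E^{(t)}$ for all $t\ge0$. *)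

theory Defs
  imports Main Complex_Main
begin

text \<open>Vectors b_1..b_m in R^n are encoded as b :: nat => nat => real, with b i l the
  l-th component of the i-th vector (i < m, l < n). An alpha in R^m is a nat => real
  used at indices < m.\<close>

definition Dm :: "real \<Rightarrow> nat \<Rightarrow> nat \<Rightarrow> (nat \<Rightarrow> nat \<Rightarrow> real) \<Rightarrow> nat \<Rightarrow> nat \<Rightarrow> real" where
  "Dm r m n b i j = r / real m * (\<Sum>l<n. b i l * b j l)"

definition Dbar :: "real \<Rightarrow> nat \<Rightarrow> nat \<Rightarrow> (nat \<Rightarrow> nat \<Rightarrow> real) \<Rightarrow> real" where
  "Dbar r m n b = Max {Dm r m n b i j | i j. i < m \<and> j < m}"

definition Err :: "real \<Rightarrow> nat \<Rightarrow> nat \<Rightarrow> (nat \<Rightarrow> nat \<Rightarrow> real) \<Rightarrow> (nat \<Rightarrow> real) \<Rightarrow> nat \<Rightarrow> real" where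
  "Err r m n b a i = (\<Sum>j<m. Dm r m n b i j * a i * a j) - 1"

definition TotErr :: "real \<Rightarrow> nat \<Rightarrow> nat \<Rightarrow> (nat \<Rightarrow> nat \<Rightarrow> real) \<Rightarrow> (nat \<Rightarrow> real) \<Rightarrow> real" where
  "TotErr r m n b a = (\<Sum>i<m. \<bar>Err r m n b a i\<bar>)"

end

theory Submission
  imports Defs
begin

text \<open>Updating coordinate K of a positive vector so that its own error vanishes changes every
  other error E_i by a_i D_iK \<delta>, where \<delta> is the change of a_K; these perturbations add up to
  at most |\<delta>| s, while the error removed at K equals |\<delta>| (s + D_KK (a_K + a'_K)) \<ge> |\<delta>| s.
  This works for every choice of K.\<close>

definition quad_root :: "real \<Rightarrow> real \<Rightarrow> real" where
  "quad_root s d = (- s + sqrt (s\<^sup>2 + 4 * d)) / (2 * d)"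

lemma quad_root_pos:
  assumes "d > 0"
  shows "quad_root s d > 0"
proof -
  have "\<bar>s\<bar> = sqrt (s\<^sup>2)" by simp
  also have "\<dots> < sqrt (s\<^sup>2 + 4 * d)" using assms by (intro real_sqrt_less_mono) simp
  finally show ?thesis unfolding quad_root_def using assms by simp
qed

lemma quad_root_eq:
  assumes "d > 0"
  shows "quad_root s d * (s + d * quad_root s d) = 1"
proof -
  define q where "q = sqrt (s\<^sup>2 + 4 * d)"
  have q2: "q\<^sup>2 = s\<^sup>2 + 4 * d" unfolding q_def using assms by simp
  have "quad_root s d * (s + d * quad_root s d) = (q - s) * (q + s) / (4 * d)"
    unfolding quad_root_def q_def[symmetric] using assms by (simp add: field_simps)
  also have "(q - s) * (q + s) = 4 * d" using q2 by (simp add: algebra_simps power2_eq_square)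
  finally show ?thesis using assms by simp
qed

definition quad_err :: "(nat \<Rightarrow> nat \<Rightarrow> real) \<Rightarrow> nat \<Rightarrow> (nat \<Rightarrow> real) \<Rightarrow> nat \<Rightarrow> real" where
  "quad_err D m a i = (\<Sum>j<m. D i j * a i * a j) - 1"

lemma sum_lessThan_remove:
  fixes K m :: nat
  shows "K < m \<Longrightarrow> (\<Sum>j<m. f j) = f K + (\<Sum>j\<in>{..<m} - {K}. f j)"
  by (rule sum.remove) auto

lemma quad_err_diag_split:
  "K < m \<Longrightarrow> quad_err D m a K = a K * ((\<Sum>j\<in>{..<m} - {K}. D K j * a j) + D K K * a K) - 1"
  unfolding quad_err_def by (subst sum_lessThan_remove) (simp_all add: sum_distrib_left algebra_simps)

lemma quad_err_update_other:
  assumes "K < m" "i < m" "i \<noteq> K" and other: "\<forall>j<m. j \<noteq> K \<longrightarrow> a' j = a j"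
  shows "quad_err D m a' i = quad_err D m a i + a i * D i K * (a' K - a K)"
proof -
  have "(\<Sum>j<m. D i j * a' i * a' j) = D i K * a i * a' K + (\<Sum>j\<in>{..<m} - {K}. D i j * a i * a j)"
    using assms by (subst sum_lessThan_remove) (auto intro!: sum.cong)
  moreover have "(\<Sum>j<m. D i j * a i * a j) = D i K * a i * a K + (\<Sum>j\<in>{..<m} - {K}. D i j * a i * a j)"
    using assms(1) by (rule sum_lessThan_remove)
  ultimately show ?thesis unfolding quad_err_def by (simp add: algebra_simps)
qed

lemma coordinate_update_pos:
  assumes "0 < D K K" and "\<forall>i<m. 0 < a i" and "\<forall>i<m. i \<noteq> K \<longrightarrow> a' i = a i"
    and "a' K = quad_root s (D K K)"
  shows "\<forall>i<m. 0 < a' i"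
  using assms quad_root_pos by (metis)

lemma tot_quad_err_coordinate_update_le:
  fixes D :: "nat \<Rightarrow> nat \<Rightarrow> real" and a a' :: "nat \<Rightarrow> real" and m K :: nat
  defines "s \<equiv> \<Sum>i\<in>{..<m} - {K}. D i K * a i"
  assumes K: "K < m" and sym: "\<forall>i<m. \<forall>j<m. D i j = D j i"
    and nonneg: "\<forall>i<m. \<forall>j<m. 0 \<le> D i j" and diag: "0 < D K K"
    and pos: "\<forall>i<m. 0 < a i" and other: "\<forall>i<m. i \<noteq> K \<longrightarrow> a' i = a i"
    and a'K: "a' K = quad_root s (D K K)"
  shows "(\<Sum>i<m. \<bar>quad_err D m a' i\<bar>) \<le> (\<Sum>i<m. \<bar>quad_err D m a i\<bar>)"
proof -
  define d where "d = D K K"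
  define \<delta> where "\<delta> = a' K - a K"
  let ?E = "quad_err D m a" and ?E' = "quad_err D m a'"
  have s0: "s \<ge> 0" unfolding s_def using pos nonneg K
    by (intro sum_nonneg mult_nonneg_nonneg) (auto simp: less_imp_le)
  have a'K_pos: "a' K > 0" using a'K diag quad_root_pos by simp
  have a'K_root: "a' K * (s + d * a' K) = 1" unfolding a'K d_def using diag by (rule quad_root_eq)
  have row_sum: "(\<Sum>j\<in>{..<m} - {K}. D K j * c j) = s" if "\<forall>j<m. j \<noteq> K \<longrightarrow> c j = a j" for c
    unfolding s_def using that sym K by (intro sum.cong) auto
  have E'K: "?E' K = 0"
    using quad_err_diag_split[OF K, of D a'] row_sum[OF other] a'K_root by (simp add: d_def)
  have gain_pos: "0 < d * (a K + a' K)"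
    using diag pos K a'K_pos unfolding d_def by (intro mult_pos_pos add_pos_pos) auto
  have EK: "\<bar>?E K\<bar> = \<bar>\<delta>\<bar> * (s + d * (a K + a' K))"
  proof -
    have "?E K = a K * (s + d * a K) - a' K * (s + d * a' K)"
      using quad_err_diag_split[OF K, of D a] row_sum a'K_root by (simp add: d_def)
    also have "\<dots> = - \<delta> * (s + d * (a K + a' K))" unfolding \<delta>_def by (simp add: algebra_simps)
    moreover have "0 < s + d * (a K + a' K)" using s0 gain_pos by simp
    ultimately show ?thesis by (simp add: abs_mult)
  qed
  have "(\<Sum>i<m. \<bar>?E' i\<bar>) = (\<Sum>i\<in>{..<m} - {K}. \<bar>?E i + a i * D i K * \<delta>\<bar>)"
    using E'K quad_err_update_other[OF K _ _ other] unfolding \<delta>_def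
    by (subst sum_lessThan_remove[OF K]) (auto intro!: sum.cong)
  also have "\<dots> \<le> (\<Sum>i\<in>{..<m} - {K}. \<bar>?E i\<bar> + \<bar>\<delta>\<bar> * (D i K * a i))"
  proof (rule sum_mono)
    fix i assume i: "i \<in> {..<m} - {K}"
    have "\<bar>a i * D i K * \<delta>\<bar> = \<bar>\<delta>\<bar> * (D i K * a i)"
      using pos nonneg i K by (simp add: abs_mult less_imp_le)
    then show "\<bar>?E i + a i * D i K * \<delta>\<bar> \<le> \<bar>?E i\<bar> + \<bar>\<delta>\<bar> * (D i K * a i)"
      by (metis abs_triangle_ineq)
  qed
  also have "\<dots> = (\<Sum>i\<in>{..<m} - {K}. \<bar>?E i\<bar>) + \<bar>\<delta>\<bar> * s"
    unfolding s_def by (simp add: sum.distrib sum_distrib_left)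
  also have "\<dots> \<le> (\<Sum>i\<in>{..<m} - {K}. \<bar>?E i\<bar>) + \<bar>?E K\<bar>"
    unfolding EK using gain_pos by (simp add: mult_left_mono)
  also have "\<dots> = (\<Sum>i<m. \<bar>?E i\<bar>)" by (simp add: sum_lessThan_remove[OF K])
  finally show ?thesis .
qed

lemma Err_eq_quad_err: "Err r m n b a i = quad_err (Dm r m n b) m a i"
  by (simp add: Err_def quad_err_def)

lemma TotErr_eq: "TotErr r m n b a = (\<Sum>i<m. \<bar>quad_err (Dm r m n b) m a i\<bar>)"
  by (simp add: TotErr_def Err_eq_quad_err)

lemma Dm_sym: "Dm r m n b i j = Dm r m n b j i"
  unfolding Dm_def by (simp add: mult.commute)

lemma Dm_nonneg:
  "r \<ge> 0 \<Longrightarrow> (\<And>l. l < n \<Longrightarrow> b i l \<ge> 0) \<Longrightarrow> (\<And>l. l < n \<Longrightarrow> b j l \<ge> 0) \<Longrightarrow> Dm r m n b i j \<ge> 0"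
  unfolding Dm_def by (auto intro!: sum_nonneg mult_nonneg_nonneg divide_nonneg_nonneg)

lemma Dm_diag_pos:
  assumes "r > 0" "m \<ge> 1" and "l < n" "b i l \<noteq> 0"
  shows "Dm r m n b i i > 0"
proof -
  have "(\<Sum>l'<n. b i l' * b i l') > 0"
    by (rule sum_pos2[of "{..<n}" l]) (use assms in \<open>auto simp: zero_less_mult_iff\<close>)
  then show ?thesis unfolding Dm_def using assms by simp
qed

lemma Dm_le_Dbar: "i < m \<Longrightarrow> j < m \<Longrightarrow> Dm r m n b i j \<le> Dbar r m n b"
proof -
  assume "i < m" "j < m"
  have "{Dm r m n b i j | i j. i < m \<and> j < m} = (\<lambda>(i, j). Dm r m n b i j) ` ({..<m} \<times> {..<m})"
    by auto
  then show ?thesis unfolding Dbar_def using \<open>i < m\<close> \<open>j < m\<close> by (intro Max_ge) auto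
qed

theorem lemma3:
  fixes n m :: nat and r :: real and b :: "nat \<Rightarrow> nat \<Rightarrow> real"
    and alpha :: "nat \<Rightarrow> nat \<Rightarrow> real" and k :: "nat \<Rightarrow> nat"
  assumes "n \<ge> 1" and "m \<ge> 1" and "r > 0"
    and b_nonneg: "\<And>i l. i < m \<Longrightarrow> l < n \<Longrightarrow> b i l \<ge> 0"
    and b_nonzero: "\<And>i. i < m \<Longrightarrow> \<exists>l<n. b i l \<noteq> 0"
    and init: "\<And>i. i < m \<Longrightarrow> alpha 0 i = sqrt (1 / (Dbar r m n b * real m))"
    and k_range: "\<And>t. k t < m"
    and k_max: "\<And>t i. i < m \<Longrightarrow> \<bar>Err r m n b (alpha t) i\<bar> \<le> \<bar>Err r m n b (alpha t) (k t)\<bar>"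
    and step_other: "\<And>t i. i < m \<Longrightarrow> i \<noteq> k t \<Longrightarrow> alpha (Suc t) i = alpha t i"
    and step_k: "\<And>t. alpha (Suc t) (k t) =
        (let s = (\<Sum>i\<in>{..<m} - {k t}. Dm r m n b i (k t) * alpha t i);
             d = Dm r m n b (k t) (k t)
         in (- s + sqrt (s\<^sup>2 + 4 * d)) / (2 * d))"
  shows "\<forall>t. TotErr r m n b (alpha (Suc t)) \<le> TotErr r m n b (alpha t)"
proof
  fix t
  let ?D = "Dm r m n b"
  have diag: "\<And>i. i < m \<Longrightarrow> ?D i i > 0" using Dm_diag_pos assms(2,3) b_nonzero by metis
  have nonneg: "\<forall>i<m. \<forall>j<m. 0 \<le> ?D i j" using Dm_nonneg assms(3) b_nonneg by simp
  have step_root: "alpha (Suc t) (k t) = quad_root (\<Sum>i\<in>{..<m} - {k t}. ?D i (k t) * alpha t i) (?D (k t) (k t))"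
    for t using step_k[of t] by (simp add: Let_def quad_root_def)
  have "0 < ?D 0 0" "?D 0 0 \<le> Dbar r m n b" using assms(2) diag Dm_le_Dbar by auto
  then have init_pos: "\<forall>i<m. 0 < alpha 0 i" using init assms(2) by simp
  have pos: "\<forall>i<m. 0 < alpha t i" for t
  proof (induction t)
    case 0
    show ?case by (rule init_pos)
  next
    case (Suc t)
    show ?case
      using coordinate_update_pos[of ?D "k t" m "alpha t" "alpha (Suc t)"] diag[OF k_range[of t]] Suc
      by (simp add: step_other step_root)
  qed
  show "TotErr r m n b (alpha (Suc t)) \<le> TotErr r m n b (alpha t)"
    unfolding TotErr_eq
    by (rule tot_quad_err_coordinate_update_le[of "k t" m ?D "alpha t" "alpha (Suc t)"])
       (use pos Dm_sym nonneg diag k_range step_other step_root in auto)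
qed

end
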